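(* Let $X$ be an algebraic K3 surface of Picard number $9$ with an even set of eight disjoint smooth rational curves $N_1,\dots,N_8$, let $N\subseteq NS(X)$ be the minimal primitive sublattice containing them, let $L$ generate $N^\perp\subseteq NS(X)$ with $L^2=2d>0$, $L^2\equiv 0\pmod 4$, and suppose $NS(X)\neq \mathbb{Z}L\oplus N$, so that $NS(X)$ is generated by $\mathbb{Z}L\oplus N$ and a class $\frac{L+v}{2}$ with $v\in N$. Then: (i) if $L^2\equiv 4\pmod 8$, after renumbering the $N_i$ one can take $v=-N_1-N_2$, and then $\frac{L-N_3-\dots-N_8}{2}\in NS(X)$ as well; (ii) if $L^2\equiv 0\pmod 8$, after renumbering the $N_i$ one can take $v=-(N_1+N_2+N_3+N_4)$, and then $\frac{L-N_5-N_6-N_7-N_8}{2}\in NS(X)$ as well.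
   Context: All varieties are over $\mathbb{C}$. A set of disjoint smooth rational curves $N_1,\dots,N_m$ on a smooth surface $X$ is an even set if there is $\delta\in\mathrm{Pic}(X)$ with $N_1+\dots+N_m\sim 2\delta$. The minimal primitive sublattice of $NS(X)$ containing an even set of eight disjoint smooth rational curves on a K3 surface is the Nikulin lattice $N$, generated by $N_1,\dots,N_8$ and $\hat N=\frac12\sum N_i$, with $N_i\cdot N_j=-2\delta_{ij}$. *)

theory Defs
  imports "HOL-Analysis.Analysis"
begin

text \<open>NS(X) is modelled as a subgroup
of a real vector space (playing the role of NS(X) tensor R inside H^2(X,R)),
equipped with the (real-valued) intersection form.\<close>

definition sym_bilinear :: "('v::real_vector \<Rightarrow> 'v \<Rightarrow> real) \<Rightarrow> bool" where
  "sym_bilinear B \<longleftrightarrow> bilinear B \<and> (\<forall>x y. B x y = B y x)"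

definition subgroup_of :: "'v::real_vector set \<Rightarrow> bool" where
  "subgroup_of M \<longleftrightarrow> 0 \<in> M \<and> (\<forall>x\<in>M. \<forall>y\<in>M. x + y \<in> M) \<and> (\<forall>x\<in>M. - x \<in> M)"

definition free_of_rank :: "'v::real_vector set \<Rightarrow> nat \<Rightarrow> bool" where
  "free_of_rank M r \<longleftrightarrow> (\<exists>e :: nat \<Rightarrow> 'v.
      (\<forall>c. (\<Sum>i<r. c i *\<^sub>R e i) = 0 \<longrightarrow> (\<forall>i<r. c i = 0)) \<and>
      M = {(\<Sum>i<r. real_of_int (k i) *\<^sub>R e i) | k. True})"

definition even_lattice :: "('v::real_vector \<Rightarrow> 'v \<Rightarrow> real) \<Rightarrow> 'v set \<Rightarrow> bool" where
  "even_lattice B M \<longleftrightarrow> subgroup_of M \<and>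
      (\<forall>x\<in>M. \<forall>y\<in>M. B x y \<in> \<int>) \<and>
      (\<forall>x\<in>M. B x x / 2 \<in> \<int>) \<and>
      (\<forall>x\<in>M. (\<forall>y\<in>M. B x y = 0) \<longrightarrow> x = 0)"

definition zspan :: "'v::real_vector set \<Rightarrow> 'v set" where
  "zspan S = {(\<Sum>s\<in>F. real_of_int (k s) *\<^sub>R s) | F k. finite F \<and> F \<subseteq> S}"

definition prim_closure :: "'v::real_vector set \<Rightarrow> 'v set \<Rightarrow> 'v set" where
  "prim_closure M S = {x \<in> M. \<exists>k::int. k \<noteq> 0 \<and> of_int k *\<^sub>R x \<in> zspan S}"

definition orth_in :: "('v::real_vector \<Rightarrow> 'v \<Rightarrow> real) \<Rightarrow> 'v set \<Rightarrow> 'v set \<Rightarrow> 'v set" where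
  "orth_in B M A = {x \<in> M. \<forall>y\<in>A. B x y = 0}"

end

theory Submission
  imports Defs
begin

(* For z in NS the class 2 z + sum_i (z.N_i) N_i is orthogonal to every N_i, hence an integer
   multiple of L; so 2 NS lies in Z L + sum_i Z N_i. An element of NS outside Z L + N can
   therefore be shifted by a multiple of L to some y with 2 y = L - sum_i c_i N_i, and evenness
   of y^2 = (2 d - 2 sum_i c_i^2) / 4 gives d = #{i. c_i odd} (mod 4). Adding integer
   combinations of the N_i and of the even-set class (sum_i N_i) / 2 turns y into
   (L - sum_{i in T} N_i) / 2, where T is the set of odd c_i, and also into the same class for
   the complement of T; either of the two generates NS over Z L + N. As L / 2 is not in NS,
   T is neither empty nor everything, which leaves |T| in {2, 6} if L^2 = 4 (mod 8) and
   |T| = 4 if L^2 = 0 (mod 8). *)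

lemma subgroup_of_add: "subgroup_of M \<Longrightarrow> x \<in> M \<Longrightarrow> y \<in> M \<Longrightarrow> x + y \<in> M"
  by (simp add: subgroup_of_def)

lemma subgroup_of_diff: "subgroup_of M \<Longrightarrow> x \<in> M \<Longrightarrow> y \<in> M \<Longrightarrow> x - y \<in> M"
  by (metis diff_conv_add_uminus subgroup_of_def)

lemma subgroup_of_scaleR_int:
  assumes "subgroup_of M" "x \<in> M"
  shows "of_int k *\<^sub>R x \<in> M"
proof -
  have nat_multiple: "of_nat n *\<^sub>R x \<in> M" for n
    using assms by (induction n) (auto simp: subgroup_of_def scaleR_left_distrib)
  show ?thesis
  proof (cases "k \<ge> 0")
    case True
    then show ?thesis using nat_multiple[of "nat k"] by simp
  next
    case False
    then show ?thesis
      using nat_multiple[of "nat (- k)"] assms(1) unfolding subgroup_of_def by force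
  qed
qed

lemma subgroup_of_sum_scaleR_int:
  assumes "subgroup_of M" "\<And>i. i \<in> A \<Longrightarrow> v i \<in> M"
  shows "(\<Sum>i\<in>A. of_int (a i) *\<^sub>R v i) \<in> M"
  using assms(2)
proof (induction A rule: infinite_finite_induct)
  case (insert x F)
  then show ?case using assms(1) by (simp add: subgroup_of_add subgroup_of_scaleR_int)
qed (use assms(1) in \<open>simp_all add: subgroup_of_def\<close>)

lemma bilinear_sum_left: "bilinear h \<Longrightarrow> h (sum f S) z = (\<Sum>i\<in>S. h (f i) z)"
  unfolding bilinear_def using linear_sum[of "\<lambda>x. h x z"] by blast

lemma bilinear_sum_right: "bilinear h \<Longrightarrow> h z (sum f S) = (\<Sum>i\<in>S. h z (f i))"
  unfolding bilinear_def using linear_sum[of "h z"] by blast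

lemma sum_scaleR_int_in_zspan:
  assumes "finite A" "inj_on v A"
  shows "(\<Sum>i\<in>A. of_int (a i) *\<^sub>R v i) \<in> zspan (v ` A)"
proof -
  have "(\<Sum>s\<in>v ` A. of_int (a (the_inv_into A v s)) *\<^sub>R s) = (\<Sum>i\<in>A. of_int (a i) *\<^sub>R v i)"
    using assms(2) by (simp add: sum.reindex the_inv_into_f_f)
  then show ?thesis
    unfolding zspan_def using assms(1)
    by (intro CollectI exI[of _ "v ` A"] exI[of _ "\<lambda>s. a (the_inv_into A v s)"]) auto
qed

lemma sum_subset_eq_sum_of_bool_scaleR:
  fixes f :: "'a \<Rightarrow> 'b::real_vector"
  assumes "finite A" "T \<subseteq> A"
  shows "sum f T = (\<Sum>i\<in>A. of_bool (i \<in> T) *\<^sub>R f i)"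
proof -
  have "(\<Sum>i\<in>A. of_bool (i \<in> T) *\<^sub>R f i) = (\<Sum>i\<in>A. if i \<in> T then f i else 0)"
    by (intro sum.cong) auto
  also have "\<dots> = sum f T"
    using assms by (simp add: sum.inter_restrict[symmetric] Int_absorb1)
  finally show ?thesis ..
qed

lemma sum_squares_mod_4:
  fixes c :: "'i \<Rightarrow> int"
  assumes "finite A"
  shows "(\<Sum>i\<in>A. (c i)\<^sup>2) mod 4 = int (card {i\<in>A. odd (c i)}) mod 4"
proof -
  have square_mod_4: "x\<^sup>2 mod 4 = (if odd x then 1 else 0)" for x :: int
  proof (cases "even x")
    case False
    then obtain b where "x = 2 * b + 1" using oddE by blast
    then have "x\<^sup>2 = 4 * (b * b + b) + 1" by (simp add: power2_eq_square algebra_simps)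
    then show ?thesis using False by presburger
  qed (auto elim!: evenE simp: power2_eq_square)
  have "(\<Sum>i\<in>A. (c i)\<^sup>2) mod 4 = (\<Sum>i\<in>A. (c i)\<^sup>2 mod 4) mod 4"
    by (simp add: mod_sum_eq)
  also have "(\<Sum>i\<in>A. (c i)\<^sup>2 mod 4) = int (card {i\<in>A. odd (c i)})"
    using assms by (simp add: square_mod_4 sum.If_cases Collect_conj_eq Int_commute)
  finally show ?thesis .
qed

lemma enumeration_of_subset:
  assumes "finite A" "T \<subseteq> A"
  obtains \<sigma> where "bij_betw \<sigma> {1..card A} A" "\<sigma> ` {1..card T} = T"
    "\<sigma> ` {card T + 1..card A} = A - T"
proof -
  have "card T \<le> card A"
    using assms by (simp add: card_mono)
  obtain f where f: "bij_betw f {1..card T} T"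
    using finite_same_card_bij[of "{1..card T}" T] assms finite_subset by fastforce
  obtain g where g: "bij_betw g {card T + 1..card A} (A - T)"
  proof (rule finite_same_card_bij[THEN exE])
    show "card {card T + 1..card A} = card (A - T)"
      using assms by (simp add: card_Diff_subset finite_subset)
  qed (use assms in auto)
  define \<sigma> where "\<sigma> i = (if i \<le> card T then f i else g i)" for i
  have "bij_betw \<sigma> {1..card T} T"
    using f by (rule bij_betw_cong[THEN iffD1, rotated]) (simp add: \<sigma>_def)
  moreover have "bij_betw \<sigma> {card T + 1..card A} (A - T)"
    using g by (rule bij_betw_cong[THEN iffD1, rotated]) (simp add: \<sigma>_def)
  moreover have "bij_betw \<sigma> ({1..card T} \<union> {card T + 1..card A}) (T \<union> (A - T))"
    using calculation by (rule bij_betw_combine) auto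
  moreover have "{1..card T} \<union> {card T + 1..card A} = {1..card A}" "T \<union> (A - T) = A"
    using assms(2) \<open>card T \<le> card A\<close> by auto
  ultimately show ?thesis
    using that by (auto simp: bij_betw_def)
qed

locale disjoint_curves =
  fixes B :: "'v::real_vector \<Rightarrow> 'v \<Rightarrow> real" and NS :: "'v set"
    and C :: "'i \<Rightarrow> 'v" and I :: "'i set" and L :: 'v
  assumes sym_bilinear: "sym_bilinear B"
    and even_lattice: "even_lattice B NS"
    and finite_I: "finite I"
    and curve_in_NS: "\<And>i. i \<in> I \<Longrightarrow> C i \<in> NS"
    and curves_intersection: "\<And>i j. i \<in> I \<Longrightarrow> j \<in> I \<Longrightarrow> B (C i) (C j) = (if i = j then -2 else 0)"
    and orth_N_eq: "orth_in B NS (prim_closure NS (C ` I)) = {of_int k *\<^sub>R L | k. True}"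
    and L_nonzero: "L \<noteq> 0"
begin

abbreviation N :: "'v set" where
  "N \<equiv> prim_closure NS (C ` I)"

abbreviation half_class :: "'i set \<Rightarrow> 'v" where
  "half_class T \<equiv> (1/2) *\<^sub>R (L - sum C T)"

lemma bilinear_B: "bilinear B"
  using sym_bilinear by (simp add: sym_bilinear_def)

lemma B_commute: "B x y = B y x"
  using sym_bilinear by (simp add: sym_bilinear_def)

lemma subgroup_NS: "subgroup_of NS"
  using even_lattice by (simp add: even_lattice_def)

lemma B_in_Ints: "x \<in> NS \<Longrightarrow> y \<in> NS \<Longrightarrow> B x y \<in> \<int>"
  using even_lattice by (simp add: even_lattice_def)

lemma half_square_in_Ints: "x \<in> NS \<Longrightarrow> B x x / 2 \<in> \<int>"
  using even_lattice by (simp add: even_lattice_def)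

lemma inj_on_C: "inj_on C I"
proof (rule inj_onI)
  fix i j assume "i \<in> I" "j \<in> I" "C i = C j"
  then show "i = j"
    using curves_intersection[of i i] curves_intersection[of i j] by (auto split: if_splits)
qed

lemma N_subset_NS: "N \<subseteq> NS"
  by (auto simp: prim_closure_def)

lemma curve_in_N:
  assumes "i \<in> I"
  shows "C i \<in> N"
proof -
  have "of_int 1 *\<^sub>R C i \<in> zspan (C ` I)"
    unfolding zspan_def using assms by (intro CollectI exI[of _ "{C i}"] exI[of _ "\<lambda>_. 1"]) auto
  then show ?thesis
    unfolding prim_closure_def using assms curve_in_NS by (intro CollectI conjI exI[of _ 1]) auto
qed

lemma half_of_curve_combination_in_N:
  assumes "u \<in> NS" "2 *\<^sub>R u = (\<Sum>i\<in>I. of_int (a i) *\<^sub>R C i)"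
  shows "u \<in> N"
  using assms sum_scaleR_int_in_zspan[OF finite_I inj_on_C, of a]
  unfolding prim_closure_def by (intro CollectI conjI exI[of _ 2]) auto

lemma B_curve_combination:
  assumes "j \<in> I"
  shows "B (\<Sum>i\<in>I. a i *\<^sub>R C i) (C j) = -2 * a j"
proof -
  have "B (\<Sum>i\<in>I. a i *\<^sub>R C i) (C j) = (\<Sum>i\<in>I. a i * B (C i) (C j))"
    by (simp add: bilinear_sum_left[OF bilinear_B] bilinear_lmul[OF bilinear_B])
  also have "\<dots> = (\<Sum>i\<in>I. if i = j then -2 * a j else 0)"
    using assms curves_intersection by (intro sum.cong) auto
  finally show ?thesis
    using assms finite_I by simp
qed

lemma B_curve_combination_square:
  "B (\<Sum>i\<in>I. a i *\<^sub>R C i) (\<Sum>i\<in>I. a i *\<^sub>R C i) = -2 * (\<Sum>i\<in>I. (a i)\<^sup>2)"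
proof -
  have "B (\<Sum>i\<in>I. a i *\<^sub>R C i) (\<Sum>i\<in>I. a i *\<^sub>R C i)
      = (\<Sum>j\<in>I. a j * B (\<Sum>i\<in>I. a i *\<^sub>R C i) (C j))"
    by (simp add: bilinear_sum_right[OF bilinear_B] bilinear_rmul[OF bilinear_B])
  also have "\<dots> = (\<Sum>j\<in>I. -2 * (a j)\<^sup>2)"
    by (intro sum.cong) (simp_all add: B_curve_combination power2_eq_square)
  finally show ?thesis
    by (simp add: sum_distrib_left)
qed

lemma orthogonal_curves_imp_orthogonal_N:
  assumes "\<And>i. i \<in> I \<Longrightarrow> B p (C i) = 0" "u \<in> N"
  shows "B p u = 0"
proof -
  obtain k :: int where "k \<noteq> 0" "of_int k *\<^sub>R u \<in> zspan (C ` I)"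
    using assms(2) by (auto simp: prim_closure_def)
  then obtain F c where F: "F \<subseteq> C ` I" "of_int k *\<^sub>R u = (\<Sum>s\<in>F. of_int (c s) *\<^sub>R s)"
    unfolding zspan_def by blast
  have "of_int k * B p u = B p (of_int k *\<^sub>R u)"
    by (simp add: bilinear_rmul[OF bilinear_B])
  also have "\<dots> = (\<Sum>s\<in>F. of_int (c s) * B p s)"
    by (simp add: F(2) bilinear_sum_right[OF bilinear_B] bilinear_rmul[OF bilinear_B])
  also have "\<dots> = 0"
    using F(1) assms(1) by (intro sum.neutral) auto
  finally show ?thesis
    using \<open>k \<noteq> 0\<close> by simp
qed

lemma orthogonal_curves_imp_multiple_of_L:
  assumes "p \<in> NS" "\<And>i. i \<in> I \<Longrightarrow> B p (C i) = 0"
  obtains k :: int where "p = of_int k *\<^sub>R L"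
proof -
  have "p \<in> orth_in B NS N"
    using assms orthogonal_curves_imp_orthogonal_N by (auto simp: orth_in_def)
  then show ?thesis
    using orth_N_eq that by auto
qed

lemma L_in_orth_N: "L \<in> orth_in B NS N"
  using orth_N_eq by (auto intro: exI[of _ 1])

lemma L_in_NS: "L \<in> NS"
  using L_in_orth_N by (simp add: orth_in_def)

lemma B_L_curve: "i \<in> I \<Longrightarrow> B L (C i) = 0"
  using L_in_orth_N curve_in_N by (simp add: orth_in_def)

lemma B_L_curve_combination: "B L (\<Sum>i\<in>I. a i *\<^sub>R C i) = 0"
  by (simp add: bilinear_sum_right[OF bilinear_B] bilinear_rmul[OF bilinear_B] B_L_curve)

lemma double_in_L_plus_curve_span:
  assumes "z \<in> NS"
  obtains k :: int and a :: "'i \<Rightarrow> int"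
  where "2 *\<^sub>R z = of_int k *\<^sub>R L - (\<Sum>i\<in>I. of_int (a i) *\<^sub>R C i)"
proof -
  define a where "a i = \<lfloor>B z (C i)\<rfloor>" for i
  have a: "of_int (a i) = B z (C i)" if "i \<in> I" for i
    using B_in_Ints[OF assms curve_in_NS[OF that]] by (simp add: a_def)
  define p where "p = 2 *\<^sub>R z + (\<Sum>i\<in>I. of_int (a i) *\<^sub>R C i)"
  have "p \<in> NS"
    unfolding p_def scaleR_2
    using assms subgroup_NS curve_in_NS by (intro subgroup_of_add subgroup_of_sum_scaleR_int) auto
  moreover have "B p (C j) = 0" if "j \<in> I" for j
    using that a by (simp add: p_def bilinear_ladd[OF bilinear_B] bilinear_lmul[OF bilinear_B]
        B_curve_combination)
  ultimately obtain k where "p = of_int k *\<^sub>R L"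
    using orthogonal_curves_imp_multiple_of_L by blast
  then show ?thesis
    using that[of k a] by (simp add: p_def algebra_simps)
qed

lemma half_L_notin_NS: "(1/2) *\<^sub>R L \<notin> NS"
proof
  assume "(1/2) *\<^sub>R L \<in> NS"
  moreover have "B ((1/2) *\<^sub>R L) (C i) = 0" if "i \<in> I" for i
    using that by (simp add: bilinear_lmul[OF bilinear_B] B_L_curve)
  ultimately obtain k :: int where "(1/2) *\<^sub>R L = of_int k *\<^sub>R L"
    using orthogonal_curves_imp_multiple_of_L by blast
  then have "(of_int k - 1/2) *\<^sub>R L = 0"
    by (simp add: scaleR_left_diff_distrib)
  moreover have "(of_int k :: real) \<noteq> 1/2"
  proof
    assume "(of_int k :: real) = 1/2"
    then have "of_int (2 * k) = (1 :: real)" by simp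
    then show False by presburger
  qed
  ultimately show False
    using L_nonzero by simp
qed

lemma half_class_nonempty: "half_class T \<in> NS \<Longrightarrow> T \<noteq> {}"
  using half_L_notin_NS by auto

lemma half_class_generates_NS:
  assumes "T \<subseteq> I" "half_class T \<in> NS"
  shows "NS = {of_int k *\<^sub>R L + n + of_int m *\<^sub>R half_class T | k m n. n \<in> N}"
proof
  show "{of_int k *\<^sub>R L + n + of_int m *\<^sub>R half_class T | k m n. n \<in> N} \<subseteq> NS"
    using subgroup_of_add[OF subgroup_NS] subgroup_of_scaleR_int[OF subgroup_NS L_in_NS]
      subgroup_of_scaleR_int[OF subgroup_NS assms(2)] N_subset_NS
    by blast
  show "NS \<subseteq> {of_int k *\<^sub>R L + n + of_int m *\<^sub>R half_class T | k m n. n \<in> N}"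
  proof
    fix z assume "z \<in> NS"
    then obtain k a where k: "2 *\<^sub>R z = of_int k *\<^sub>R L - (\<Sum>i\<in>I. of_int (a i) *\<^sub>R C i)"
      by (rule double_in_L_plus_curve_span)
    define n where "n = z - of_int k *\<^sub>R half_class T"
    have "n \<in> NS"
      unfolding n_def using \<open>z \<in> NS\<close> assms(2) subgroup_NS
      by (intro subgroup_of_diff subgroup_of_scaleR_int)
    moreover have "2 *\<^sub>R n = (\<Sum>i\<in>I. of_int (k * of_bool (i \<in> T) - a i) *\<^sub>R C i)"
      unfolding n_def
      by (simp add: k sum_subset_eq_sum_of_bool_scaleR[OF finite_I assms(1)] algebra_simps
          scaleR_sum_right sum_subtractf[symmetric])
    ultimately have "n \<in> N"
      by (rule half_of_curve_combination_in_N)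
    moreover have "z = of_int 0 *\<^sub>R L + n + of_int k *\<^sub>R half_class T"
      by (simp add: n_def)
    ultimately show "z \<in> {of_int k *\<^sub>R L + n + of_int m *\<^sub>R half_class T | k m n. n \<in> N}"
      by blast
  qed
qed

lemma exists_half_element:
  assumes "NS \<noteq> {of_int k *\<^sub>R L + n | k n. n \<in> N}"
  obtains y c where "y \<in> NS" "2 *\<^sub>R y = L - (\<Sum>i\<in>I. of_int (c i) *\<^sub>R C i)"
proof -
  have "{of_int k *\<^sub>R L + n | k n. n \<in> N} \<subseteq> NS"
    using subgroup_of_add[OF subgroup_NS] subgroup_of_scaleR_int[OF subgroup_NS L_in_NS] N_subset_NS
    by blast
  then obtain x where x: "x \<in> NS" "x \<notin> {of_int k *\<^sub>R L + n | k n. n \<in> N}"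
    using assms by blast
  obtain k c where k: "2 *\<^sub>R x = of_int k *\<^sub>R L - (\<Sum>i\<in>I. of_int (c i) *\<^sub>R C i)"
    using double_in_L_plus_curve_span[OF x(1)] .
  define j where "j = k div 2"
  define y where "y = x - of_int j *\<^sub>R L"
  have "y \<in> NS"
    unfolding y_def using x(1) subgroup_NS L_in_NS by (intro subgroup_of_diff subgroup_of_scaleR_int)
  have two_y: "2 *\<^sub>R y = of_int (k mod 2) *\<^sub>R L - (\<Sum>i\<in>I. of_int (c i) *\<^sub>R C i)"
  proof -
    have "of_int k = (of_int (k mod 2) + 2 * of_int j :: real)"
      unfolding j_def by (metis mult_div_mod_eq of_int_add of_int_mult of_int_numeral add.commute)
    then show ?thesis
      unfolding y_def by (simp add: k algebra_simps)
  qed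
  have "odd k"
  proof
    assume "even k"
    then have "2 *\<^sub>R y = (\<Sum>i\<in>I. of_int (- c i) *\<^sub>R C i)"
      by (simp add: two_y sum_negf)
    then have "y \<in> N"
      using \<open>y \<in> NS\<close> by (rule half_of_curve_combination_in_N[rotated])
    moreover have "x = of_int j *\<^sub>R L + y"
      by (simp add: y_def)
    ultimately show False
      using x(2) by blast
  qed
  then show ?thesis
    using that[OF \<open>y \<in> NS\<close>] two_y by (simp add: odd_iff_mod_2_eq_one)
qed

lemma self_intersection_mod_4:
  assumes "B L L = 2 * of_int d" "y \<in> NS" "2 *\<^sub>R y = L - (\<Sum>i\<in>I. of_int (c i) *\<^sub>R C i)"
  shows "d mod 4 = int (card {i\<in>I. odd (c i)}) mod 4"
proof -
  define S where "S = (\<Sum>i\<in>I. of_int (c i) *\<^sub>R C i)"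
  define Q where "Q = (\<Sum>i\<in>I. (c i)\<^sup>2)"
  have "B L S = 0" "B S L = 0"
    using B_L_curve_combination B_commute[of L S] by (simp_all add: S_def)
  moreover have "B S S = - 2 * of_int Q"
    unfolding S_def Q_def B_curve_combination_square by simp
  ultimately have "4 * B y y = 2 * of_int d - 2 * of_int Q"
    using bilinear_lmul[OF bilinear_B, of 2 y "2 *\<^sub>R y"] bilinear_rmul[OF bilinear_B, of y 2 y]
    by (simp add: assms(1) assms(3)[folded S_def] bilinear_lsub[OF bilinear_B]
        bilinear_rsub[OF bilinear_B])
  moreover obtain m where "B y y / 2 = of_int m"
    using half_square_in_Ints[OF assms(2)] by (auto elim: Ints_cases)
  ultimately have "d - Q = 4 * m"
    by linarith
  then have "d mod 4 = Q mod 4"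
    by presburger
  then show ?thesis
    unfolding Q_def sum_squares_mod_4[OF finite_I] .
qed

lemma half_class_in_NS:
  assumes "\<delta> \<in> NS" "sum C I = 2 *\<^sub>R \<delta>"
    and "y \<in> NS" "2 *\<^sub>R y = L - (\<Sum>i\<in>I. of_int (c i) *\<^sub>R C i)"
    and "T \<subseteq> I" "\<And>i. i \<in> I \<Longrightarrow> even (c i - of_bool (i \<in> T) - e)"
  shows "half_class T \<in> NS"
proof -
  define f where "f i = (c i - of_bool (i \<in> T) - e) div 2" for i
  have f: "of_int (c i) - of_bool (i \<in> T) = 2 * of_int (f i) + (of_int e :: real)"
    if "i \<in> I" for i
  proof -
    have "c i - of_bool (i \<in> T) = 2 * f i + e"
      using assms(6)[OF that] unfolding f_def by simp
    then have "real_of_int (c i - of_bool (i \<in> T)) = of_int (2 * f i + e)"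
      by (simp only:)
    then show ?thesis
      by simp
  qed
  define w where "w = y + (\<Sum>i\<in>I. of_int (f i) *\<^sub>R C i) + of_int e *\<^sub>R \<delta>"
  have "w \<in> NS"
    unfolding w_def using assms(1,3) subgroup_NS curve_in_NS
    by (intro subgroup_of_add subgroup_of_sum_scaleR_int subgroup_of_scaleR_int)
  have "L - sum C T = 2 *\<^sub>R y + (\<Sum>i\<in>I. (of_int (c i) - of_bool (i \<in> T)) *\<^sub>R C i)"
    by (simp add: assms(4) sum_subset_eq_sum_of_bool_scaleR[OF finite_I assms(5)]
        scaleR_left_diff_distrib sum_subtractf)
  also have "\<dots> = 2 *\<^sub>R y + (\<Sum>i\<in>I. (2 * of_int (f i)) *\<^sub>R C i) + of_int e *\<^sub>R sum C I"
    by (simp add: f scaleR_left_distrib sum.distrib scaleR_sum_right cong: sum.cong)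
  also have "\<dots> = 2 *\<^sub>R w"
    by (simp add: w_def assms(2) scaleR_right_distrib scaleR_sum_right)
  finally have "half_class T = w"
    by simp
  then show ?thesis
    using \<open>w \<in> NS\<close> by simp
qed

lemma half_classes_exist:
  assumes "B L L = 2 * of_int d" "\<delta> \<in> NS" "sum C I = 2 *\<^sub>R \<delta>"
    and "NS \<noteq> {of_int k *\<^sub>R L + n | k n. n \<in> N}"
  obtains T where "T \<subseteq> I" "int (card T) mod 4 = d mod 4"
    "half_class T \<in> NS" "half_class (I - T) \<in> NS"
proof -
  obtain y c where y: "y \<in> NS" "2 *\<^sub>R y = L - (\<Sum>i\<in>I. of_int (c i) *\<^sub>R C i)"
    using exists_half_element[OF assms(4)] .
  define T where "T = {i\<in>I. odd (c i)}"
  have "half_class T \<in> NS"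
    by (rule half_class_in_NS[OF assms(2,3) y, of T 0]) (auto simp: T_def)
  moreover have "half_class (I - T) \<in> NS"
    by (rule half_class_in_NS[OF assms(2,3) y, of _ 1]) (auto simp: T_def)
  ultimately show ?thesis
    using that[of T] self_intersection_mod_4[OF assms(1) y] by (auto simp: T_def)
qed

lemma enumerated_half_classes:
  assumes "T \<subseteq> I" "half_class T \<in> NS" "half_class (I - T) \<in> NS"
  shows "\<exists>\<sigma>. bij_betw \<sigma> {1..card I} I \<and>
    NS = {of_int k *\<^sub>R L + n + of_int m *\<^sub>R ((1/2) *\<^sub>R (L - (\<Sum>i=1..card T. C (\<sigma> i))))
          | k m n. n \<in> N} \<and>
    (1/2) *\<^sub>R (L - (\<Sum>i=card T + 1..card I. C (\<sigma> i))) \<in> NS"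
proof -
  obtain \<sigma> where \<sigma>: "bij_betw \<sigma> {1..card I} I" "\<sigma> ` {1..card T} = T"
    "\<sigma> ` {card T + 1..card I} = I - T"
    using enumeration_of_subset[OF finite_I assms(1)] .
  have reindex: "sum C (\<sigma> ` J) = (\<Sum>i\<in>J. C (\<sigma> i))" if "J \<subseteq> {1..card I}" for J
  proof -
    have "inj_on \<sigma> J"
      using that \<sigma>(1) bij_betw_imp_inj_on inj_on_subset by blast
    then show ?thesis
      by (simp add: sum.reindex)
  qed
  have "card T \<le> card I"
    using assms(1) finite_I by (rule card_mono[rotated])
  then have sums: "sum C T = (\<Sum>i=1..card T. C (\<sigma> i))"
    "sum C (I - T) = (\<Sum>i=card T + 1..card I. C (\<sigma> i))"
    using reindex[of "{1..card T}"] reindex[of "{card T + 1..card I}"] \<sigma>(2,3) by auto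
  show ?thesis
    using \<sigma>(1) half_class_generates_NS[OF assms(1,2)] assms(3) unfolding sums by blast
qed

end

theorem corollary3p4:
  fixes B :: "'v::real_vector \<Rightarrow> 'v \<Rightarrow> real"
    and NS :: "'v set" and L :: 'v and C :: "nat \<Rightarrow> 'v" and d :: int
  assumes symB: "sym_bilinear B"
    and evenNS: "even_lattice B NS"
    and rank9: "free_of_rank NS 9"
    and curves: "\<forall>i\<in>{1..8}. C i \<in> NS"
    and disj: "\<forall>i\<in>{1..8}. \<forall>j\<in>{1..8}. B (C i) (C j) = (if i = j then -2 else 0)"
    and evenset: "\<exists>\<delta>\<in>NS. (\<Sum>i=1..8. C i) = 2 *\<^sub>R \<delta>"
    and Lgen: "orth_in B NS (prim_closure NS (C ` {1..8})) = {of_int k *\<^sub>R L | k. True}"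
    and L2: "B L L = 2 * of_int d" and dpos: "d > 0" and d4: "(4::int) dvd 2 * d"
    and notsum: "NS \<noteq> {of_int k *\<^sub>R L + n | k n. n \<in> prim_closure NS (C ` {1..8})}"
  shows "((2 * d) mod 8 = 4 \<longrightarrow>
           (\<exists>\<sigma>. bij_betw \<sigma> {1..8::nat} {1..8} \<and>
              NS = {of_int k *\<^sub>R L + n + of_int m *\<^sub>R ((1/2) *\<^sub>R (L - C (\<sigma> 1) - C (\<sigma> 2)))
                    | k m n. n \<in> prim_closure NS (C ` {1..8})} \<and>
              (1/2) *\<^sub>R (L - (\<Sum>i=3..8. C (\<sigma> i))) \<in> NS))
       \<and> ((2 * d) mod 8 = 0 \<longrightarrow>
           (\<exists>\<sigma>. bij_betw \<sigma> {1..8::nat} {1..8} \<and>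
              NS = {of_int k *\<^sub>R L + n
                      + of_int m *\<^sub>R ((1/2) *\<^sub>R (L - (C (\<sigma> 1) + C (\<sigma> 2) + C (\<sigma> 3) + C (\<sigma> 4))))
                    | k m n. n \<in> prim_closure NS (C ` {1..8})} \<and>
              (1/2) *\<^sub>R (L - C (\<sigma> 5) - C (\<sigma> 6) - C (\<sigma> 7) - C (\<sigma> 8)) \<in> NS))"
proof -
  have "L \<noteq> 0"
    using L2 dpos symB by (auto simp: sym_bilinear_def bilinear_lzero)
  interpret disjoint_curves B NS C "{1..8::nat}" L
    using symB evenNS curves disj Lgen \<open>L \<noteq> 0\<close> by unfold_locales auto
  obtain \<delta> where \<delta>: "\<delta> \<in> NS" "sum C {1..8} = 2 *\<^sub>R \<delta>"
    using evenset by auto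
  obtain T where T: "T \<subseteq> {1..8}" "int (card T) mod 4 = d mod 4"
    "half_class T \<in> NS" "half_class ({1..8} - T) \<in> NS"
    using half_classes_exist[OF L2 \<delta> notsum] .
  have "T \<noteq> {}" "{1..8} - T \<noteq> {}"
    using T(3,4) half_class_nonempty by blast+
  then have "T \<subset> {1..8}"
    using T(1) by blast
  then have card_T: "0 < card T" "card T < 8" "card ({1..8} - T) = 8 - card T"
    using \<open>T \<noteq> {}\<close> psubset_card_mono[of "{1..8::nat}" T]
    by (auto simp: card_gt_0_iff finite_subset card_Diff_subset)
  show ?thesis
  proof (intro conjI impI)
    assume "(2 * d) mod 8 = 4"
    then have "card T = 2 \<or> card ({1..8} - T) = 2"
      using T(2) card_T by presburger
    then obtain S where S: "S \<subseteq> {1..8}" "card S = 2"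
      "half_class S \<in> NS" "half_class ({1..8} - S) \<in> NS"
      using T double_diff[OF T(1) order_refl] by (elim disjE) (blast, metis Diff_subset)
    show "\<exists>\<sigma>. bij_betw \<sigma> {1..8::nat} {1..8} \<and>
              NS = {of_int k *\<^sub>R L + n + of_int m *\<^sub>R ((1/2) *\<^sub>R (L - C (\<sigma> 1) - C (\<sigma> 2)))
                    | k m n. n \<in> prim_closure NS (C ` {1..8})} \<and>
              (1/2) *\<^sub>R (L - (\<Sum>i=3..8. C (\<sigma> i))) \<in> NS"
      using enumerated_half_classes[OF S(1,3,4)] by (simp add: S(2) numeral_eq_Suc diff_diff_eq)
  next
    assume "(2 * d) mod 8 = 0"
    then have "card T = 4"
      using T(2) card_T by presburger
    show "\<exists>\<sigma>. bij_betw \<sigma> {1..8::nat} {1..8} \<and>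
              NS = {of_int k *\<^sub>R L + n
                      + of_int m *\<^sub>R ((1/2) *\<^sub>R (L - (C (\<sigma> 1) + C (\<sigma> 2) + C (\<sigma> 3) + C (\<sigma> 4))))
                    | k m n. n \<in> prim_closure NS (C ` {1..8})} \<and>
              (1/2) *\<^sub>R (L - C (\<sigma> 5) - C (\<sigma> 6) - C (\<sigma> 7) - C (\<sigma> 8)) \<in> NS"
      using enumerated_half_classes[OF T(1,3,4)] \<open>card T = 4\<close>
      by (simp add: numeral_eq_Suc diff_diff_eq add.assoc)
  qed
qed

end
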